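(* Let $K$ be a skew field, let $V$ be a left (topological) vector space over $K$ with basis $v^0,v^1,\ldots$, and let $V'$ be the dual right (topological) vector space with basis $p_0,p_1,\ldots$, with pairing $(\cdot,\cdot):V\times V'\to K$. Put $y_i^k=(v^k,p_i)$ and let $D$ be the infinite matrix whose entry in row $k$ and column $i$ is $y_i^k$ ($i,k\ge 0$). For a generic matrix $D$ there exist a unique infinite upper triangular matrix $A=(a_m^i)_{i,m\ge0}$ (i.e. $a_m^i=0$ for $i>m$) and a unique infinite lower triangular matrix $C=(c_k^m)_{m,k\ge0}$ (i.e. $c_k^m=0$ for $k>m$) such that the vectors $$w^m=\sum_{k=0}^m c_k^m v^k\in V,\qquad q_m=\sum_{i=0}^m p_i a_m^i\in V'$$ form biorthogonal bases of $V$ and $V'$, i.e. satisfy $(w^m,q_{m'})=0$ for $m\ne m'$ and $(w^m,p_m)=(v^m,q_m)=1$ for all $m\ge0$.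
   Context: The pairing satisfies $(\lambda v,p\mu)=\lambda(v,p)\mu$ for $\lambda,\mu\in K$, and is additive in each argument. "Generic" means that $D$ avoids the degenerate cases in which the relevant finite square submatrices of $D$ (here the leading principal submatrices $(y_i^k)_{0\le i,k\le m}$, $m\ge0$) fail to be invertible. *)

theory Defs
  imports Main
begin

definition left_vs :: "('k::division_ring \<Rightarrow> 'v::ab_group_add \<Rightarrow> 'v) \<Rightarrow> bool" where
  "left_vs sm \<longleftrightarrow>
     (\<forall>a x y. sm a (x + y) = sm a x + sm a y) \<and>
     (\<forall>a b x. sm (a + b) x = sm a x + sm b x) \<and>
     (\<forall>a b x. sm (a * b) x = sm a (sm b x)) \<and>
     (\<forall>x. sm 1 x = x)"

definition right_vs :: "('p::ab_group_add \<Rightarrow> 'k::division_ring \<Rightarrow> 'p) \<Rightarrow> bool" where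
  "right_vs sm \<longleftrightarrow>
     (\<forall>a x y. sm (x + y) a = sm x a + sm y a) \<and>
     (\<forall>a b x. sm x (a + b) = sm x a + sm x b) \<and>
     (\<forall>a b x. sm x (a * b) = sm (sm x a) b) \<and>
     (\<forall>x. sm x 1 = x)"

definition pairing :: "('k::division_ring \<Rightarrow> 'v::ab_group_add \<Rightarrow> 'v) \<Rightarrow> ('p::ab_group_add \<Rightarrow> 'k \<Rightarrow> 'p)
    \<Rightarrow> ('v \<Rightarrow> 'p \<Rightarrow> 'k) \<Rightarrow> bool" where
  "pairing smv smp pr \<longleftrightarrow>
     (\<forall>x y q. pr (x + y) q = pr x q + pr y q) \<and>
     (\<forall>x q r. pr x (q + r) = pr x q + pr x r) \<and>
     (\<forall>l x q m. pr (smv l x) (smp q m) = l * pr x q * m)"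

definition left_indep :: "('k::division_ring \<Rightarrow> 'v::ab_group_add \<Rightarrow> 'v) \<Rightarrow> (nat \<Rightarrow> 'v) \<Rightarrow> bool" where
  "left_indep smv v \<longleftrightarrow>
     (\<forall>n c. (\<Sum>k<n. smv (c k) (v k)) = 0 \<longrightarrow> (\<forall>k<n. c k = 0))"

definition right_indep :: "('p::ab_group_add \<Rightarrow> 'k::division_ring \<Rightarrow> 'p) \<Rightarrow> (nat \<Rightarrow> 'p) \<Rightarrow> bool" where
  "right_indep smp p \<longleftrightarrow>
     (\<forall>n c. (\<Sum>i<n. smp (p i) (c i)) = 0 \<longrightarrow> (\<forall>i<n. c i = 0))"

definition principal_invertible :: "(nat \<Rightarrow> nat \<Rightarrow> 'k::division_ring) \<Rightarrow> nat \<Rightarrow> bool" where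
  "principal_invertible D m \<longleftrightarrow>
     (\<exists>B::nat \<Rightarrow> nat \<Rightarrow> 'k. \<forall>i\<le>m. \<forall>k\<le>m.
        (\<Sum>j\<le>m. D i j * B j k) = (if i = k then 1 else 0) \<and>
        (\<Sum>j\<le>m. B i j * D j k) = (if i = k then 1 else 0))"

definition generic :: "(nat \<Rightarrow> nat \<Rightarrow> 'k::division_ring) \<Rightarrow> bool" where
  "generic D \<longleftrightarrow> (\<forall>m. principal_invertible D m)"

end

theory Submission
  imports Defs
begin

text \<open>Write \<open>D\<^sub>m\<close> for the leading \<open>(m+1)\<times>(m+1)\<close> block of \<open>D\<close>. In matrix terms we need \<open>C\<close>
  lower and \<open>A\<close> upper triangular such that \<open>C D A\<close> is diagonal and \<open>C D\<close>, \<open>D A\<close> have unit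
  diagonal. Taking row \<open>m\<close> of \<open>C\<close> to be the last row of \<open>D\<^sub>m\<^sup>-\<^sup>1\<close> and column \<open>m\<close> of \<open>A\<close> the
  last column of \<open>D\<^sub>m\<^sup>-\<^sup>1\<close> makes \<open>C D\<close> upper and \<open>D A\<close> lower unitriangular, so \<open>C D A\<close> is
  both upper and lower triangular. Conversely, by induction on \<open>m\<close>: the diagonal entries
  of \<open>C\<close> and \<open>A\<close> at \<open>j < m\<close> are last entries of such rows and columns, hence nonzero (a
  zero there would put a nonzero vector in the kernel of \<open>D\<^sub>j\<^sub>-\<^sub>1\<close>), so forward substitution
  in the biorthogonality relations makes row \<open>m\<close> of \<open>C D\<close> and column \<open>m\<close> of \<open>D A\<close> unit
  vectors, which pins down row \<open>m\<close> of \<open>C\<close> and column \<open>m\<close> of \<open>A\<close>.\<close>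

definition upper_triangular :: "(nat \<Rightarrow> nat \<Rightarrow> 'a::zero) \<Rightarrow> bool" where
  "upper_triangular A \<longleftrightarrow> (\<forall>i j. j < i \<longrightarrow> A i j = 0)"

definition lower_triangular :: "(nat \<Rightarrow> nat \<Rightarrow> 'a::zero) \<Rightarrow> bool" where
  "lower_triangular C \<longleftrightarrow> (\<forall>i j. i < j \<longrightarrow> C i j = 0)"

text \<open>\<open>dual_row D m c\<close> says that \<open>w = \<Sum>\<^sub>k\<^sub>\<le>\<^sub>m c\<^sub>k v\<^sup>k\<close> has \<open>(w, p\<^sub>i) = \<delta>\<^sub>i\<^sub>m\<close> for \<open>i \<le> m\<close>, i.e. \<open>c\<close> is the
  last row of \<open>D\<^sub>m\<^sup>-\<^sup>1\<close>; dually for \<open>dual_col\<close> and \<open>q = \<Sum>\<^sub>i\<^sub>\<le>\<^sub>m p\<^sub>i a\<^sub>i\<close>.\<close>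

definition dual_row :: "(nat \<Rightarrow> nat \<Rightarrow> 'a::division_ring) \<Rightarrow> nat \<Rightarrow> (nat \<Rightarrow> 'a) \<Rightarrow> bool" where
  "dual_row D m c \<longleftrightarrow> (\<forall>i\<le>m. (\<Sum>k\<le>m. c k * D k i) = (if i = m then 1 else 0))"

definition dual_col :: "(nat \<Rightarrow> nat \<Rightarrow> 'a::division_ring) \<Rightarrow> nat \<Rightarrow> (nat \<Rightarrow> 'a) \<Rightarrow> bool" where
  "dual_col D m a \<longleftrightarrow> (\<forall>k\<le>m. (\<Sum>i\<le>m. D k i * a i) = (if k = m then 1 else 0))"

lemma sum_sum_mult_assoc:
  fixes c :: "'i \<Rightarrow> 'a::semiring_0"
  shows "(\<Sum>k\<in>K. c k * (\<Sum>i\<in>I. D k i * a i)) = (\<Sum>i\<in>I. (\<Sum>k\<in>K. c k * D k i) * a i)"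
  by (simp add: sum_distrib_left sum_distrib_right mult.assoc sum.swap[of _ I])

lemma principal_left_kernel:
  fixes D :: "nat \<Rightarrow> nat \<Rightarrow> 'a::division_ring"
  assumes "principal_invertible D m"
    and zero: "\<forall>i\<le>m. (\<Sum>k\<le>m. c k * D k i) = 0" and "j \<le> m"
  shows "c j = 0"
proof -
  obtain B where B: "\<forall>i\<le>m. \<forall>k\<le>m. (\<Sum>l\<le>m. D i l * B l k) = (if i = k then 1 else 0)"
    using assms(1) unfolding principal_invertible_def by blast
  have "c j = (\<Sum>k\<le>m. c k * (if k = j then 1 else 0))"
    using \<open>j \<le> m\<close> by (simp add: if_distrib[of "(*) _"] cong: if_cong)
  also have "\<dots> = (\<Sum>k\<le>m. c k * (\<Sum>i\<le>m. D k i * B i j))"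
    using B \<open>j \<le> m\<close> by (intro sum.cong) auto
  also have "\<dots> = (\<Sum>i\<le>m. (\<Sum>k\<le>m. c k * D k i) * B i j)"
    by (rule sum_sum_mult_assoc)
  also have "\<dots> = 0"
    using zero by simp
  finally show ?thesis .
qed

lemma principal_right_kernel:
  fixes D :: "nat \<Rightarrow> nat \<Rightarrow> 'a::division_ring"
  assumes "principal_invertible D m"
    and zero: "\<forall>k\<le>m. (\<Sum>i\<le>m. D k i * a i) = 0" and "j \<le> m"
  shows "a j = 0"
proof -
  obtain B where B: "\<forall>i\<le>m. \<forall>k\<le>m. (\<Sum>l\<le>m. B i l * D l k) = (if i = k then 1 else 0)"
    using assms(1) unfolding principal_invertible_def by blast
  have "a j = (\<Sum>i\<le>m. (if j = i then 1 else 0) * a i)"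
    using \<open>j \<le> m\<close> by (simp add: if_distrib[of "\<lambda>x. x * _"] cong: if_cong)
  also have "\<dots> = (\<Sum>i\<le>m. (\<Sum>k\<le>m. B j k * D k i) * a i)"
    using B \<open>j \<le> m\<close> by (intro sum.cong) auto
  also have "\<dots> = (\<Sum>k\<le>m. B j k * (\<Sum>i\<le>m. D k i * a i))"
    by (rule sum_sum_mult_assoc[symmetric])
  also have "\<dots> = 0"
    using zero by simp
  finally show ?thesis .
qed

lemma dual_row_exists:
  assumes "principal_invertible D m"
  shows "\<exists>c. dual_row D m c"
proof -
  obtain B where "\<forall>i\<le>m. \<forall>k\<le>m. (\<Sum>l\<le>m. B i l * D l k) = (if i = k then 1 else 0)"
    using assms unfolding principal_invertible_def by blast
  then have "dual_row D m (B m)"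
    by (simp add: dual_row_def)
  then show ?thesis
    by blast
qed

lemma dual_col_exists:
  assumes "principal_invertible D m"
  shows "\<exists>a. dual_col D m a"
proof -
  obtain B where "\<forall>i\<le>m. \<forall>k\<le>m. (\<Sum>l\<le>m. D i l * B l k) = (if i = k then 1 else 0)"
    using assms unfolding principal_invertible_def by blast
  then have "dual_col D m (\<lambda>i. B i m)"
    by (simp add: dual_col_def)
  then show ?thesis
    by blast
qed

lemma dual_row_unique:
  assumes "principal_invertible D m" "dual_row D m c" "dual_row D m c'" "j \<le> m"
  shows "c j = c' j"
  using principal_left_kernel[OF assms(1), of "\<lambda>k. c k - c' k"] assms(2-4)
  by (simp add: dual_row_def left_diff_distrib sum_subtractf)

lemma dual_col_unique:
  assumes "principal_invertible D m" "dual_col D m a" "dual_col D m a'" "j \<le> m"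
  shows "a j = a' j"
  using principal_right_kernel[OF assms(1), of "\<lambda>i. a i - a' i"] assms(2-4)
  by (simp add: dual_col_def right_diff_distrib sum_subtractf)

lemma dual_row_last_nonzero:
  assumes "generic D" "dual_row D m c"
  shows "c m \<noteq> 0"
proof
  assume last: "c m = 0"
  have "c k = 0" if "k \<le> m" for k
  proof (cases "k = m")
    case False
    then obtain n where n: "m = Suc n" "k \<le> n"
      using \<open>k \<le> m\<close> by (cases m) auto
    have "\<forall>i\<le>n. (\<Sum>k\<le>n. c k * D k i) = 0"
      using assms(2) last n by (auto simp: dual_row_def)
    then show ?thesis
      using principal_left_kernel[of D n c k] assms(1) n(2) by (simp add: generic_def)
  qed (use last in simp)
  then have "(\<Sum>k\<le>m. c k * D k m) = 0"
    by simp
  moreover have "(\<Sum>k\<le>m. c k * D k m) = 1"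
    using assms(2) by (simp add: dual_row_def)
  ultimately show False
    by simp
qed

lemma dual_col_last_nonzero:
  assumes "generic D" "dual_col D m a"
  shows "a m \<noteq> 0"
proof
  assume last: "a m = 0"
  have "a i = 0" if "i \<le> m" for i
  proof (cases "i = m")
    case False
    then obtain n where n: "m = Suc n" "i \<le> n"
      using \<open>i \<le> m\<close> by (cases m) auto
    have "\<forall>k\<le>n. (\<Sum>i\<le>n. D k i * a i) = 0"
      using assms(2) last n by (auto simp: dual_col_def)
    then show ?thesis
      using principal_right_kernel[of D n a i] assms(1) n(2) by (simp add: generic_def)
  qed (use last in simp)
  then have "(\<Sum>i\<le>m. D m i * a i) = 0"
    by simp
  moreover have "(\<Sum>i\<le>m. D m i * a i) = 1"
    using assms(2) by (simp add: dual_col_def)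
  ultimately show False
    by simp
qed

lemma forward_substitution_upper:
  fixes A :: "nat \<Rightarrow> nat \<Rightarrow> 'a::division_ring"
  assumes "\<forall>m<n. (\<Sum>i\<le>m. x i * A i m) = 0" "\<forall>m<n. A m m \<noteq> 0" "j < n"
  shows "x j = 0"
  using \<open>j < n\<close>
proof (induction j rule: less_induct)
  case (less j)
  have "(\<Sum>i\<le>j. x i * A i j) = (\<Sum>i<j. x i * A i j) + x j * A j j"
    by (simp add: lessThan_Suc_atMost[symmetric])
  then show ?case
    using assms(1,2) less by simp
qed

lemma forward_substitution_lower:
  fixes C :: "nat \<Rightarrow> nat \<Rightarrow> 'a::division_ring"
  assumes "\<forall>m<n. (\<Sum>k\<le>m. C m k * y k) = 0" "\<forall>m<n. C m m \<noteq> 0" "j < n"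
  shows "y j = 0"
  using \<open>j < n\<close>
proof (induction j rule: less_induct)
  case (less j)
  have "(\<Sum>k\<le>j. C j k * y k) = (\<Sum>k<j. C j k * y k) + C j j * y j"
    by (simp add: lessThan_Suc_atMost[symmetric])
  then show ?case
    using assms(1,2) less by simp
qed

text \<open>With \<open>w\<^sup>m = \<Sum>\<^sub>k C\<^sub>m\<^sub>k v\<^sup>k\<close> and \<open>q\<^sub>m = \<Sum>\<^sub>i p\<^sub>i A\<^sub>i\<^sub>m\<close>, the three sums below are \<open>(w\<^sup>m, q\<^sub>m\<^sub>')\<close>,
  \<open>(w\<^sup>m, p\<^sub>m)\<close> and \<open>(v\<^sup>m, q\<^sub>m)\<close>.\<close>

definition biorthogonal_factors ::
    "(nat \<Rightarrow> nat \<Rightarrow> 'a::division_ring) \<Rightarrow> (nat \<Rightarrow> nat \<Rightarrow> 'a) \<Rightarrow> (nat \<Rightarrow> nat \<Rightarrow> 'a) \<Rightarrow> bool" where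
  "biorthogonal_factors D A C \<longleftrightarrow> upper_triangular A \<and> lower_triangular C \<and>
     (\<forall>m m'. m \<noteq> m' \<longrightarrow> (\<Sum>k\<le>m. C m k * (\<Sum>i\<le>m'. D k i * A i m')) = 0) \<and>
     (\<forall>m. (\<Sum>k\<le>m. C m k * D k m) = 1 \<and> (\<Sum>i\<le>m. D m i * A i m) = 1)"

lemma dual_imp_biorthogonal_factors:
  assumes "upper_triangular A" "lower_triangular C"
    and dual: "\<And>m. dual_row D m (C m) \<and> dual_col D m (\<lambda>i. A i m)"
  shows "biorthogonal_factors D A C"
  unfolding biorthogonal_factors_def
proof (intro conjI allI impI)
  fix m m' :: nat
  assume "m \<noteq> m'"
  then consider "m' < m" | "m < m'"
    by linarith
  then show "(\<Sum>k\<le>m. C m k * (\<Sum>i\<le>m'. D k i * A i m')) = 0"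
  proof cases
    case 1
    then show ?thesis
      using dual[of m] by (simp add: sum_sum_mult_assoc dual_row_def)
  next
    case 2
    then show ?thesis
      using dual[of m'] by (simp add: dual_col_def)
  qed
qed (use assms dual in \<open>auto simp: dual_row_def dual_col_def\<close>)

lemma biorthogonal_factors_imp_dual:
  assumes "generic D" "biorthogonal_factors D A C"
  shows "dual_row D m (C m) \<and> dual_col D m (\<lambda>i. A i m)"
proof (induction m rule: less_induct)
  case (less m)
  have orth: "\<And>m m'. m \<noteq> m' \<Longrightarrow> (\<Sum>k\<le>m. C m k * (\<Sum>i\<le>m'. D k i * A i m')) = 0"
    and diag: "(\<Sum>k\<le>m. C m k * D k m) = 1" "(\<Sum>i\<le>m. D m i * A i m) = 1"
    using assms(2) unfolding biorthogonal_factors_def by blast+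
  have "\<forall>j<m. C j j \<noteq> 0"
    using less.IH dual_row_last_nonzero[OF assms(1)] by blast
  moreover have "\<forall>j<m. A j j \<noteq> 0"
    using less.IH dual_col_last_nonzero[OF assms(1), of _ "\<lambda>i. A i _"] by blast
  moreover have "\<forall>m'<m. (\<Sum>i\<le>m'. (\<Sum>k\<le>m. C m k * D k i) * A i m') = 0"
    using orth[of m] by (simp add: sum_sum_mult_assoc)
  moreover have "\<forall>m'<m. (\<Sum>k\<le>m'. C m' k * (\<Sum>i\<le>m. D k i * A i m)) = 0"
    using orth[of _ m] by simp
  ultimately have "\<forall>i<m. (\<Sum>k\<le>m. C m k * D k i) = 0" "\<forall>k<m. (\<Sum>i\<le>m. D k i * A i m) = 0"
    using forward_substitution_upper[of m "\<lambda>i. \<Sum>k\<le>m. C m k * D k i" A]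
      forward_substitution_lower[of m C "\<lambda>k. \<Sum>i\<le>m. D k i * A i m"] by blast+
  then show ?case
    using diag unfolding dual_row_def dual_col_def by (auto simp: le_less)
qed

theorem generic_biorthogonal_factors_ex1:
  assumes "generic D"
  shows "\<exists>!(A, C). biorthogonal_factors D A C"
proof -
  have "\<forall>m. \<exists>c. dual_row D m c" "\<forall>m. \<exists>a. dual_col D m a"
    using assms dual_row_exists dual_col_exists unfolding generic_def by blast+
  then obtain c a where c: "\<And>m. dual_row D m (c m)" and a: "\<And>m. dual_col D m (a m)"
    by metis
  define C0 where "C0 m k = (if k \<le> m then c m k else 0)" for m k
  define A0 where "A0 i m = (if i \<le> m then a m i else 0)" for i m
  have dual_C0: "dual_row D m (C0 m)" for m
    using c[of m] by (simp add: dual_row_def C0_def)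
  have dual_A0: "dual_col D m (\<lambda>i. A0 i m)" for m
    using a[of m] by (simp add: dual_col_def A0_def)
  have "upper_triangular A0" "lower_triangular C0"
    by (auto simp: upper_triangular_def lower_triangular_def A0_def C0_def)
  then have factors0: "biorthogonal_factors D A0 C0"
    by (rule dual_imp_biorthogonal_factors) (simp add: dual_C0 dual_A0)
  have unique: "A = A0 \<and> C = C0" if "biorthogonal_factors D A C" for A C
  proof -
    have dual: "dual_row D m (C m)" "dual_col D m (\<lambda>i. A i m)" for m
      using biorthogonal_factors_imp_dual[OF assms that] by blast+
    have invertible: "principal_invertible D m" for m
      using assms by (simp add: generic_def)
    have "C m k = C0 m k" for m k
    proof (cases "k \<le> m")
      case True
      then show ?thesis
        by (rule dual_row_unique[OF invertible dual(1) dual_C0])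
    qed (use that in \<open>simp add: biorthogonal_factors_def lower_triangular_def C0_def\<close>)
    moreover have "A k m = A0 k m" for m k
    proof (cases "k \<le> m")
      case True
      then show ?thesis
        by (rule dual_col_unique[OF invertible dual(2) dual_A0])
    qed (use that in \<open>simp add: biorthogonal_factors_def upper_triangular_def A0_def\<close>)
    ultimately show ?thesis
      by blast
  qed
  show ?thesis
  proof (rule ex1I[of _ "(A0, C0)"])
    fix AC
    assume "case AC of (A, C) \<Rightarrow> biorthogonal_factors D A C"
    then show "AC = (A0, C0)"
      by (cases AC) (simp add: unique)
  qed (simp add: factors0)
qed

lemma pairing_sum_left:
  assumes "right_vs smp" "pairing smv smp pr"
  shows "pr (\<Sum>k\<in>S. smv (c k) (x k)) q = (\<Sum>k\<in>S. c k * pr (x k) q)"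
proof -
  have "pr (smv l y) q = l * pr y q" for l y
    using assms unfolding pairing_def right_vs_def by (metis mult.right_neutral)
  moreover have "pr 0 q = 0" "pr (y + z) q = pr y q + pr z q" for y z
    using assms(2) unfolding pairing_def by (metis add_cancel_right_right add_0)+
  ultimately show ?thesis
    using sum_comp_morphism[of "\<lambda>y. pr y q" "\<lambda>k. smv (c k) (x k)" S] by (simp add: o_def)
qed

lemma pairing_sum_right:
  assumes "left_vs smv" "pairing smv smp pr"
  shows "pr x (\<Sum>i\<in>S. smp (p i) (a i)) = (\<Sum>i\<in>S. pr x (p i) * a i)"
proof -
  have "pr x (smp z l) = pr x z * l" for l z
    using assms unfolding pairing_def left_vs_def by (metis mult_1)
  moreover have "pr x 0 = 0" "pr x (y + z) = pr x y + pr x z" for y z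
    using assms(2) unfolding pairing_def by (metis add_cancel_right_right add_0)+
  ultimately show ?thesis
    using sum_comp_morphism[of "pr x" "\<lambda>i. smp (p i) (a i)" S] by (simp add: o_def)
qed

theorem theorem1:
  fixes smv :: "'k::division_ring \<Rightarrow> 'v::ab_group_add \<Rightarrow> 'v"
    and smp :: "'p::ab_group_add \<Rightarrow> 'k \<Rightarrow> 'p"
    and pr :: "'v \<Rightarrow> 'p \<Rightarrow> 'k"
    and v :: "nat \<Rightarrow> 'v" and p :: "nat \<Rightarrow> 'p"
  assumes "left_vs smv" and "right_vs smp" and "pairing smv smp pr"
    and "left_indep smv v" and "right_indep smp p"
    and "generic (\<lambda>k i. pr (v k) (p i))"
  shows "\<exists>!(A, C). (\<forall>i m. m < i \<longrightarrow> A i m = 0) \<and> (\<forall>m k. m < k \<longrightarrow> C m k = 0) \<and>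
     (let w = (\<lambda>m. \<Sum>k\<le>m. smv (C m k) (v k));
          q = (\<lambda>m. \<Sum>i\<le>m. smp (p i) (A i m))
      in (\<forall>m m'. m \<noteq> m' \<longrightarrow> pr (w m) (q m') = 0) \<and>
         (\<forall>m. pr (w m) (p m) = 1 \<and> pr (v m) (q m) = 1))"
    (is "\<exists>!(A, C). ?factors A C")
proof -
  define D where "D = (\<lambda>k i. pr (v k) (p i))"
  have expand_pair: "pr (\<Sum>k\<in>K. smv (c k) (v k)) (\<Sum>i\<in>I. smp (p i) (a i))
      = (\<Sum>k\<in>K. c k * (\<Sum>i\<in>I. D k i * a i))" for K I c a
    by (simp add: D_def pairing_sum_left[OF assms(2,3)] pairing_sum_right[OF assms(1,3)]
        sum_sum_mult_assoc)
  have expand_left: "pr (\<Sum>k\<in>K. smv (c k) (v k)) (p m) = (\<Sum>k\<in>K. c k * D k m)"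
    and expand_right: "pr (v m) (\<Sum>i\<in>I. smp (p i) (a i)) = (\<Sum>i\<in>I. D m i * a i)" for K I c a m
    by (simp_all add: D_def pairing_sum_left[OF assms(2,3)] pairing_sum_right[OF assms(1,3)])
  have "generic D"
    using assms(6) by (simp add: D_def)
  moreover have "?factors A C = biorthogonal_factors D A C" for A C
    unfolding biorthogonal_factors_def upper_triangular_def lower_triangular_def Let_def
      expand_pair expand_left expand_right ..
  ultimately show ?thesis
    using generic_biorthogonal_factors_ex1 by simp
qed

end
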